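(* Let $R$ be a field and $H$ a Hopf algebra over $R$ which is local and cocommutative. Let $S$ be a finite faithful $H$-extension of $R$ with $\mathrm{rank}_R(H)=\mathrm{rank}_R(S)$. Then $S/R$ is a Hopf-Galois extension with $H$ if and only if the Hopfological homology $S^H/IS$ of $S$ is zero.
   Context: $S$ is a finite $H$-extension of $R$ if $S$ is a finite-dimensional $R$-algebra which is a left $H$-module algebra with $S^H=R$, where $S^H=\{s\in S: hs=\varepsilon(h)s\ \forall h\in H\}$; it is faithful if $hs=0$ for all $s\in S$ implies $h=0$. $I=\{\lambda\in H: h\lambda=\varepsilon(h)\lambda\ \forall h\}$ is the set of left integrals and $IS$ is the $R$-subspace spanned by $\lambda s$, $\lambda\in I$, $s\in S$. $S/R$ is a Hopf-Galois extension with $H$ if the map $j:S\# H\to \mathrm{End}_R(S)$, $j(s\otimes h)(t)=s\,h(t)$, is bijective (where $S\#H$ is the smash product over $R$). *)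

theory Defs
  imports Main
begin

text \<open>
  The base field is R = 'k. A finite-dimensional R-vector space
  with basis indexed by a finite type 'a is identified with 'a \<Rightarrow> 'k
  (coefficient vectors). Bilinear/linear structure maps are given by their
  structure constants with respect to the bases; tensor products V \<otimes> W
  are identified with coefficient arrays on the product of index sets.

  H has basis e_a (a :: 'i), S has basis f_p (p :: 'j):
    e_a e_b = sum_c mH a b c e_c,   1_H = sum_c uH c e_c,
    Delta e_a = sum_{b,c} dH a b c e_b (x) e_c,   eps e_a = eH a,
    antipode e_a = sum_b sH a b e_b,
    f_p f_q = sum_r mS p q r f_r,   1_S = sum_r uS r f_r,
    e_a . f_p = sum_q act a p q f_q.
\<close>

definition kdelta :: "'a \<Rightarrow> 'a \<Rightarrow> 'k::field" where
  "kdelta x y = (if x = y then 1 else 0)"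

definition assoc_unital_alg :: "('a::finite \<Rightarrow> 'a \<Rightarrow> 'a \<Rightarrow> 'k::field) \<Rightarrow> ('a \<Rightarrow> 'k) \<Rightarrow> bool" where
  "assoc_unital_alg m u \<longleftrightarrow>
     (\<forall>a b c d. (\<Sum>e\<in>UNIV. m a b e * m e c d) = (\<Sum>e\<in>UNIV. m b c e * m a e d)) \<and>
     (\<forall>a c. (\<Sum>b\<in>UNIV. u b * m b a c) = kdelta a c) \<and>
     (\<forall>a c. (\<Sum>b\<in>UNIV. u b * m a b c) = kdelta a c)"

definition coassoc_counital :: "('a::finite \<Rightarrow> 'a \<Rightarrow> 'a \<Rightarrow> 'k::field) \<Rightarrow> ('a \<Rightarrow> 'k) \<Rightarrow> bool" where
  "coassoc_counital d eps \<longleftrightarrow>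
     (\<forall>a b c f. (\<Sum>e\<in>UNIV. d a e f * d e b c) = (\<Sum>e\<in>UNIV. d a b e * d e c f)) \<and>
     (\<forall>a c. (\<Sum>b\<in>UNIV. d a b c * eps b) = kdelta a c) \<and>
     (\<forall>a b. (\<Sum>c\<in>UNIV. d a b c * eps c) = kdelta a b)"

definition bialg_compat ::
  "('a::finite \<Rightarrow> 'a \<Rightarrow> 'a \<Rightarrow> 'k::field) \<Rightarrow> ('a \<Rightarrow> 'k) \<Rightarrow> ('a \<Rightarrow> 'a \<Rightarrow> 'a \<Rightarrow> 'k) \<Rightarrow> ('a \<Rightarrow> 'k) \<Rightarrow> bool" where
  "bialg_compat m u d eps \<longleftrightarrow>
     (\<forall>a b p q. (\<Sum>c\<in>UNIV. m a b c * d c p q) =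
        (\<Sum>p1\<in>UNIV. \<Sum>q1\<in>UNIV. \<Sum>p2\<in>UNIV. \<Sum>q2\<in>UNIV.
            d a p1 q1 * d b p2 q2 * m p1 p2 p * m q1 q2 q)) \<and>
     (\<forall>p q. (\<Sum>c\<in>UNIV. u c * d c p q) = u p * u q) \<and>
     (\<forall>a b. (\<Sum>c\<in>UNIV. m a b c * eps c) = eps a * eps b) \<and>
     (\<Sum>c\<in>UNIV. u c * eps c) = 1"

definition antipode_ax ::
  "('a::finite \<Rightarrow> 'a \<Rightarrow> 'a \<Rightarrow> 'k::field) \<Rightarrow> ('a \<Rightarrow> 'k) \<Rightarrow> ('a \<Rightarrow> 'a \<Rightarrow> 'a \<Rightarrow> 'k) \<Rightarrow> ('a \<Rightarrow> 'k)
     \<Rightarrow> ('a \<Rightarrow> 'a \<Rightarrow> 'k) \<Rightarrow> bool" where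
  "antipode_ax m u d eps s \<longleftrightarrow>
     (\<forall>a x. (\<Sum>b\<in>UNIV. \<Sum>c\<in>UNIV. \<Sum>b'\<in>UNIV. d a b c * s b b' * m b' c x) = eps a * u x) \<and>
     (\<forall>a x. (\<Sum>b\<in>UNIV. \<Sum>c\<in>UNIV. \<Sum>c'\<in>UNIV. d a b c * s c c' * m b c' x) = eps a * u x)"

definition hopf_algebra ::
  "('a::finite \<Rightarrow> 'a \<Rightarrow> 'a \<Rightarrow> 'k::field) \<Rightarrow> ('a \<Rightarrow> 'k) \<Rightarrow> ('a \<Rightarrow> 'a \<Rightarrow> 'a \<Rightarrow> 'k) \<Rightarrow> ('a \<Rightarrow> 'k)
     \<Rightarrow> ('a \<Rightarrow> 'a \<Rightarrow> 'k) \<Rightarrow> bool" where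
  "hopf_algebra m u d eps s \<longleftrightarrow>
     assoc_unital_alg m u \<and> coassoc_counital d eps \<and> bialg_compat m u d eps \<and> antipode_ax m u d eps s"

definition cocommutative :: "('a \<Rightarrow> 'a \<Rightarrow> 'a \<Rightarrow> 'k) \<Rightarrow> bool" where
  "cocommutative d \<longleftrightarrow> (\<forall>a b c. d a b c = d a c b)"

definition vmult :: "('a::finite \<Rightarrow> 'a \<Rightarrow> 'a \<Rightarrow> 'k::field) \<Rightarrow> ('a \<Rightarrow> 'k) \<Rightarrow> ('a \<Rightarrow> 'k) \<Rightarrow> ('a \<Rightarrow> 'k)" where
  "vmult m x y = (\<lambda>c. \<Sum>a\<in>UNIV. \<Sum>b\<in>UNIV. x a * y b * m a b c)"

definition is_unit_elem :: "('a::finite \<Rightarrow> 'a \<Rightarrow> 'a \<Rightarrow> 'k::field) \<Rightarrow> ('a \<Rightarrow> 'k) \<Rightarrow> ('a \<Rightarrow> 'k) \<Rightarrow> bool" where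
  "is_unit_elem m u x \<longleftrightarrow> (\<exists>y. vmult m x y = u \<and> vmult m y x = u)"

text \<open>Local ring (possibly noncommutative): nonzero, and the non-units are closed under addition
  (equivalently: unique maximal left ideal).\<close>
definition local_alg :: "('a::finite \<Rightarrow> 'a \<Rightarrow> 'a \<Rightarrow> 'k::field) \<Rightarrow> ('a \<Rightarrow> 'k) \<Rightarrow> bool" where
  "local_alg m u \<longleftrightarrow> u \<noteq> (\<lambda>_. 0) \<and>
     (\<forall>x y. \<not> is_unit_elem m u x \<and> \<not> is_unit_elem m u y \<longrightarrow> \<not> is_unit_elem m u (\<lambda>i. x i + y i))"

definition vact :: "('i::finite \<Rightarrow> 'j::finite \<Rightarrow> 'j \<Rightarrow> 'k::field) \<Rightarrow> ('i \<Rightarrow> 'k) \<Rightarrow> ('j \<Rightarrow> 'k) \<Rightarrow> ('j \<Rightarrow> 'k)" where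
  "vact act h s = (\<lambda>t. \<Sum>a\<in>UNIV. \<Sum>p\<in>UNIV. h a * s p * act a p t)"

definition module_algebra ::
  "('i::finite \<Rightarrow> 'i \<Rightarrow> 'i \<Rightarrow> 'k::field) \<Rightarrow> ('i \<Rightarrow> 'k) \<Rightarrow> ('i \<Rightarrow> 'i \<Rightarrow> 'i \<Rightarrow> 'k) \<Rightarrow> ('i \<Rightarrow> 'k)
     \<Rightarrow> ('j::finite \<Rightarrow> 'j \<Rightarrow> 'j \<Rightarrow> 'k) \<Rightarrow> ('j \<Rightarrow> 'k) \<Rightarrow> ('i \<Rightarrow> 'j \<Rightarrow> 'j \<Rightarrow> 'k) \<Rightarrow> bool" where
  "module_algebra mH uH dH eH mS uS act \<longleftrightarrow>
     (\<forall>a b p q. (\<Sum>c\<in>UNIV. mH a b c * act c p q) = (\<Sum>r\<in>UNIV. act b p r * act a r q)) \<and>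
     (\<forall>p q. (\<Sum>c\<in>UNIV. uH c * act c p q) = kdelta p q) \<and>
     (\<forall>a p q t. (\<Sum>r\<in>UNIV. mS p q r * act a r t) =
        (\<Sum>b\<in>UNIV. \<Sum>c\<in>UNIV. \<Sum>x\<in>UNIV. \<Sum>y\<in>UNIV. dH a b c * act b p x * act c q y * mS x y t)) \<and>
     (\<forall>a t. (\<Sum>r\<in>UNIV. uS r * act a r t) = eH a * uS t)"

definition veps :: "('a::finite \<Rightarrow> 'k::field) \<Rightarrow> ('a \<Rightarrow> 'k) \<Rightarrow> 'k" where
  "veps eps h = (\<Sum>a\<in>UNIV. h a * eps a)"

definition invariants :: "('i::finite \<Rightarrow> 'k::field) \<Rightarrow> ('i \<Rightarrow> 'j::finite \<Rightarrow> 'j \<Rightarrow> 'k) \<Rightarrow> ('j \<Rightarrow> 'k) set" where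
  "invariants eH act = {s. \<forall>h. vact act h s = (\<lambda>t. veps eH h * s t)}"

text \<open>The copy R = R 1_S of the base field inside S.\<close>
definition scalars :: "('j \<Rightarrow> 'k::field) \<Rightarrow> ('j \<Rightarrow> 'k) set" where
  "scalars uS = {v. \<exists>c. v = (\<lambda>t. c * uS t)}"

text \<open>S is a finite H-extension of R: finite-dim R-algebra (automatic: 'j finite),
  left H-module algebra, and S^H = R.\<close>
definition H_extension ::
  "('i::finite \<Rightarrow> 'i \<Rightarrow> 'i \<Rightarrow> 'k::field) \<Rightarrow> ('i \<Rightarrow> 'k) \<Rightarrow> ('i \<Rightarrow> 'i \<Rightarrow> 'i \<Rightarrow> 'k) \<Rightarrow> ('i \<Rightarrow> 'k)
     \<Rightarrow> ('j::finite \<Rightarrow> 'j \<Rightarrow> 'j \<Rightarrow> 'k) \<Rightarrow> ('j \<Rightarrow> 'k) \<Rightarrow> ('i \<Rightarrow> 'j \<Rightarrow> 'j \<Rightarrow> 'k) \<Rightarrow> bool" where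
  "H_extension mH uH dH eH mS uS act \<longleftrightarrow>
     assoc_unital_alg mS uS \<and> module_algebra mH uH dH eH mS uS act \<and>
     invariants eH act = scalars uS"

definition faithful_action :: "('i::finite \<Rightarrow> 'j::finite \<Rightarrow> 'j \<Rightarrow> 'k::field) \<Rightarrow> bool" where
  "faithful_action act \<longleftrightarrow> (\<forall>h. (\<forall>s. vact act h s = (\<lambda>_. 0)) \<longrightarrow> h = (\<lambda>_. 0))"

definition left_integrals :: "('i::finite \<Rightarrow> 'i \<Rightarrow> 'i \<Rightarrow> 'k::field) \<Rightarrow> ('i \<Rightarrow> 'k) \<Rightarrow> ('i \<Rightarrow> 'k) set" where
  "left_integrals mH eH = {lam. \<forall>h. vmult mH h lam = (\<lambda>c. veps eH h * lam c)}"

text \<open>IS: the R-subspace of S spanned by all lam s, lam \<in> I, s \<in> S.\<close>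
definition integral_image ::
  "('i::finite \<Rightarrow> 'i \<Rightarrow> 'i \<Rightarrow> 'k::field) \<Rightarrow> ('i \<Rightarrow> 'k) \<Rightarrow> ('i \<Rightarrow> 'j::finite \<Rightarrow> 'j \<Rightarrow> 'k) \<Rightarrow> ('j \<Rightarrow> 'k) set" where
  "integral_image mH eH act =
     {v. \<exists>(n::nat) lam s. (\<forall>i<n. lam i \<in> left_integrals mH eH) \<and>
                          v = (\<lambda>t. \<Sum>i<n. vact act (lam i) (s i) t)}"

text \<open>The map j : S # H \<rightarrow> End_R(S), j(s (x) h)(t) = s h(t). An element of S (x) H is a
  coefficient array on 'j \<times> 'i; an endomorphism is a matrix M, M q t being the
  f_t-coefficient of the image of f_q.\<close>
definition galois_map ::
  "('j::finite \<Rightarrow> 'j \<Rightarrow> 'j \<Rightarrow> 'k::field) \<Rightarrow> ('i::finite \<Rightarrow> 'j \<Rightarrow> 'j \<Rightarrow> 'k)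
     \<Rightarrow> ('j \<times> 'i \<Rightarrow> 'k) \<Rightarrow> ('j \<Rightarrow> 'j \<Rightarrow> 'k)" where
  "galois_map mS act z = (\<lambda>q t. \<Sum>p\<in>UNIV. \<Sum>a\<in>UNIV. z (p, a) * (\<Sum>r\<in>UNIV. act a q r * mS p r t))"

definition hopf_galois :: "('j::finite \<Rightarrow> 'j \<Rightarrow> 'j \<Rightarrow> 'k::field) \<Rightarrow> ('i::finite \<Rightarrow> 'j \<Rightarrow> 'j \<Rightarrow> 'k) \<Rightarrow> bool" where
  "hopf_galois mS act \<longleftrightarrow> bij (galois_map mS act)"

definition hopfological_homology_zero ::
  "('i::finite \<Rightarrow> 'i \<Rightarrow> 'i \<Rightarrow> 'k::field) \<Rightarrow> ('i \<Rightarrow> 'k) \<Rightarrow> ('i \<Rightarrow> 'j::finite \<Rightarrow> 'j \<Rightarrow> 'k) \<Rightarrow> bool" where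
  "hopfological_homology_zero mH eH act \<longleftrightarrow> invariants eH act = integral_image mH eH act"

end

theory Submission
  imports Defs "HOL-Library.Function_Algebras" HOL.Vector_Spaces
begin

text \<open>
  Since H is local, its augmentation ideal consists of non-units, so in any representation
  of H a nonzero vector whose cyclic submodule has minimal dimension is invariant. Applied to
  H itself this yields a nonzero left integral \<lambda>. By faithfulness \<lambda> acts nontrivially,
  and \<lambda> S \<subseteq> S^H = R, so \<lambda> s = \<beta>(s) 1 for a nonzero functional \<beta>. Hence IS = R = S^H:
  the Hopfological homology vanishes.

  The image A of j is a subalgebra of End_R(S) containing the action of H and the left
  multiplications of S. The common kernel of the functionals \<beta> \<circ> M, M \<in> A, is an H-stable
  subspace without nonzero scalars, hence without nonzero invariants, hence zero; so these
  functionals exhaust the dual of S. The rank-one maps a \<beta>(M -) = L_a \<circ> \<lambda> \<circ> M then lie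
  in A, so j is onto, and bijective because dim (S # H) = dim S * dim H = (dim S)^2.
  Thus both sides of the equivalence hold.
\<close>

section \<open>Coordinate vector spaces\<close>

definition fscale :: "'k::field \<Rightarrow> ('m \<Rightarrow> 'k) \<Rightarrow> ('m \<Rightarrow> 'k)" where
  "fscale c f = (\<lambda>x. c * f x)"

lemma sum_fun_apply: "sum f A x = (\<Sum>i\<in>A. f i x)"
  by (induction A rule: infinite_finite_induct) auto

interpretation fun_space: vector_space "fscale :: 'k::field \<Rightarrow> ('m \<Rightarrow> 'k) \<Rightarrow> ('m \<Rightarrow> 'k)"
  by unfold_locales (auto simp: fscale_def fun_eq_iff algebra_simps)

lemma kdelta_sum_right: "(\<Sum>b\<in>UNIV. v b * kdelta b c) = (v (c::'a::finite) :: 'k::field)"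
proof -
  have "v b * kdelta b c = (if b = c then v c else 0)" for b by (simp add: kdelta_def)
  then show ?thesis by simp
qed

lemma kdelta_sum_left: "(\<Sum>b\<in>UNIV. kdelta c b * v b) = (v (c::'a::finite) :: 'k::field)"
proof -
  have "kdelta c b * v b = (if c = b then v c else 0)" for b by (simp add: kdelta_def)
  then show ?thesis by simp
qed

lemma fun_eq_sum_kdelta: "(f :: 'm::finite \<Rightarrow> 'k::field) = (\<Sum>i\<in>UNIV. fscale (f i) (kdelta i))"
  by (simp add: fun_eq_iff sum_fun_apply fscale_def kdelta_def if_distrib cong: if_cong)

lemma inj_kdelta: "inj (kdelta :: 'm \<Rightarrow> 'm \<Rightarrow> 'k::field)"
  by (rule injI) (auto simp: kdelta_def fun_eq_iff split: if_splits)

lemma independent_kdelta: "\<not> fun_space.dependent (range (kdelta :: 'm \<Rightarrow> 'm \<Rightarrow> 'k::field))"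
proof
  assume "fun_space.dependent (range (kdelta :: 'm \<Rightarrow> 'm \<Rightarrow> 'k))"
  then obtain T c and v :: "'m \<Rightarrow> 'k" where T: "finite T" "T \<subseteq> range kdelta" "(\<Sum>w\<in>T. fscale (c w) w) = 0"
    and v: "v \<in> T" "c v \<noteq> 0"
    unfolding fun_space.dependent_explicit by blast
  obtain i where i: "v = kdelta i" using T(2) v(1) by auto
  have "fscale (c w) w i = (if w = v then c v else 0)" if w: "w \<in> T" for w
  proof -
    obtain j where j: "w = kdelta j" using w T(2) by auto
    then have "w = v \<longleftrightarrow> j = i" using i by (simp add: inj_eq[OF inj_kdelta])
    then show ?thesis using i j by (cases "j = i") (simp_all add: fscale_def kdelta_def)
  qed
  then have "(\<Sum>w\<in>T. fscale (c w) w) i = c v"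
    using T(1) v(1) by (simp add: sum_fun_apply)
  moreover have "(\<Sum>w\<in>T. fscale (c w) w) i = 0"
    using T(3) by simp
  ultimately show False using v(2) by argo
qed

interpretation fun_space: finite_dimensional_vector_space
  "fscale :: 'k::field \<Rightarrow> ('m::finite \<Rightarrow> 'k) \<Rightarrow> ('m \<Rightarrow> 'k)" "range kdelta"
proof
  show "fun_space.span (range (kdelta :: 'm \<Rightarrow> 'm \<Rightarrow> 'k)) = UNIV"
  proof (intro set_eqI iffI)
    fix f :: "'m \<Rightarrow> 'k"
    have "(\<Sum>i\<in>UNIV. fscale (f i) (kdelta i)) \<in> fun_space.span (range kdelta)"
      by (intro fun_space.span_sum fun_space.span_scale fun_space.span_base) auto
    then show "f \<in> fun_space.span (range kdelta)" by (subst fun_eq_sum_kdelta)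
  qed simp
next
  show "finite (range (kdelta :: 'm \<Rightarrow> 'm \<Rightarrow> 'k))" by simp
next
  show "fun_space.independent (range (kdelta :: 'm \<Rightarrow> 'm \<Rightarrow> 'k))" by (rule independent_kdelta)
qed

interpretation fun_pair: vector_space_pair
  "fscale :: 'k::field \<Rightarrow> ('a \<Rightarrow> 'k) \<Rightarrow> _" "fscale :: 'k \<Rightarrow> ('b \<Rightarrow> 'k) \<Rightarrow> _"
  by unfold_locales

lemma linear_surj_imp_inj_fun_space:
  fixes f :: "('a::finite \<Rightarrow> 'k::field) \<Rightarrow> ('b::finite \<Rightarrow> 'k)"
  assumes "Vector_Spaces.linear fscale fscale f" and "surj f" and "card (UNIV :: 'a set) = card (UNIV :: 'b set)"
  shows "inj f"
proof -
  interpret finite_dimensional_vector_space_pair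
    "fscale :: 'k \<Rightarrow> ('a \<Rightarrow> 'k) \<Rightarrow> _" "range kdelta" "fscale :: 'k \<Rightarrow> ('b \<Rightarrow> 'k) \<Rightarrow> _" "range kdelta"
    by unfold_locales
  show ?thesis
    using assms by (intro linear_surjective_imp_injective) (simp_all add: card_image inj_kdelta)
qed

definition pairing :: "('m::finite \<Rightarrow> 'k::field) \<Rightarrow> ('m \<Rightarrow> 'k) \<Rightarrow> 'k" where
  "pairing t w = (\<Sum>q\<in>UNIV. t q * w q)"

lemma pairing_add_left: "pairing (t + t') w = pairing t w + pairing t' w"
  by (simp add: pairing_def algebra_simps sum.distrib)

lemma pairing_fscale_left: "pairing (fscale c t) w = c * pairing t w"
  by (simp add: pairing_def fscale_def algebra_simps sum_distrib_left)

lemma pairing_kdelta_left: "pairing (kdelta q) w = w q"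
  by (simp add: pairing_def kdelta_sum_left)

lemma eq_0_if_pairing_eq_0: "(\<And>s. pairing s w = 0) \<Longrightarrow> w = 0"
  by (metis pairing_kdelta_left zero_fun_apply ext)

lemma subspace_eq_UNIV_if_annihilator_trivial:
  fixes W :: "('m::finite \<Rightarrow> 'k::field) set"
  assumes W: "fun_space.subspace W" and annihilator: "\<And>t. \<forall>w\<in>W. pairing t w = 0 \<Longrightarrow> t = 0"
  shows "W = UNIV"
proof (rule ccontr)
  assume "W \<noteq> UNIV"
  then obtain x where x: "x \<notin> W" by blast
  obtain B where B: "B \<subseteq> W" "fun_space.independent B" "W \<subseteq> fun_space.span B"
    by (rule fun_space.maximal_independent_subset)
  have span_B: "fun_space.span B = W"
    using fun_space.span_minimal[OF B(1) W] B(3) by (rule subset_antisym)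
  have indep: "fun_space.independent (insert x B)"
    using fun_space.independent_insertI[of x B] x span_B B(2) by simp
  interpret vector_space_pair "fscale :: 'k \<Rightarrow> ('m \<Rightarrow> 'k) \<Rightarrow> _" "(*) :: 'k \<Rightarrow> 'k \<Rightarrow> 'k"
    by unfold_locales (simp_all add: algebra_simps)
  define f where "f = construct (insert x B) (\<lambda>b. if b = x then 1 else 0)"
  have f: "Vector_Spaces.linear fscale (*) f"
    unfolding f_def by (rule linear_construct[OF indep])
  have f_x: "f x = 1"
    unfolding f_def by (simp add: construct_basis[OF indep])
  have f_B: "f b = 0" if "b \<in> B" for b
  proof -
    have "b \<noteq> x" using that B(1) x by blast
    then show ?thesis using that unfolding f_def by (simp add: construct_basis[OF indep])
  qed
  define t where "t q = f (kdelta q)" for q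
  have f_eq_pairing: "f w = pairing t w" for w
  proof -
    from fun_eq_sum_kdelta[of w] have "f w = f (\<Sum>q\<in>UNIV. fscale (w q) (kdelta q))"
      by (rule arg_cong)
    also have "\<dots> = pairing t w"
      by (simp add: linear_sum[OF f] linear_scale[OF f] pairing_def t_def mult.commute)
    finally show ?thesis .
  qed
  have "\<forall>w\<in>W. pairing t w = 0"
    using linear_eq_0_on_span[OF f, of B] f_B span_B by (simp add: f_eq_pairing[symmetric])
  then have "t = 0" by (rule annihilator)
  with f_x show False by (simp add: f_eq_pairing pairing_def)
qed

section \<open>Algebras given by structure constants\<close>

lemma vmult_assoc:
  assumes "assoc_unital_alg m u"
  shows "vmult m (vmult m x y) z = vmult m x (vmult m y z)"
proof
  fix d
  have assoc: "\<And>a b c. (\<Sum>e\<in>UNIV. m a b e * m e c d) = (\<Sum>e\<in>UNIV. m b c e * m a e d)"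
    using assms unfolding assoc_unital_alg_def by blast
  have "vmult m (vmult m x y) z d
      = (\<Sum>a\<in>UNIV. \<Sum>b\<in>UNIV. \<Sum>c\<in>UNIV. x a * y b * z c * (\<Sum>e\<in>UNIV. m a b e * m e c d))"
    apply (simp add: vmult_def sum_distrib_left sum_distrib_right)
    apply (simp only: sum.cartesian_product UNIV_Times_UNIV)
    apply (rule sum.reindex_bij_witness[where i="\<lambda>(a,b,c,e). (e,c,a,b)" and j="\<lambda>(e,c,a,b). (a,b,c,e)"])
      apply (auto simp: mult_ac)
    done
  also have "\<dots> = (\<Sum>a\<in>UNIV. \<Sum>b\<in>UNIV. \<Sum>c\<in>UNIV. x a * y b * z c * (\<Sum>e\<in>UNIV. m b c e * m a e d))"
    by (simp only: assoc)
  also have "\<dots> = vmult m x (vmult m y z) d"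
    apply (simp add: vmult_def sum_distrib_left sum_distrib_right)
    apply (simp only: sum.cartesian_product UNIV_Times_UNIV)
    apply (rule sum.reindex_bij_witness[where i="\<lambda>(a,e,b,c). (a,b,c,e)" and j="\<lambda>(a,b,c,e). (a,e,b,c)"])
      apply (auto simp: mult_ac)
    done
  finally show "vmult m (vmult m x y) z d = vmult m x (vmult m y z) d" .
qed

lemma vmult_unit_left:
  assumes "assoc_unital_alg m u"
  shows "vmult m u v = v"
proof
  fix c
  have unit: "\<And>a. (\<Sum>b\<in>UNIV. u b * m b a c) = kdelta a c"
    using assms unfolding assoc_unital_alg_def by blast
  have "vmult m u v c = (\<Sum>a\<in>UNIV. v a * (\<Sum>b\<in>UNIV. u b * m b a c))"
    by (simp add: vmult_def sum_distrib_left) (subst sum.swap, simp add: mult_ac)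
  also have "\<dots> = v c" by (simp add: unit kdelta_sum_right)
  finally show "vmult m u v c = v c" .
qed

lemma vmult_unit_right:
  assumes "assoc_unital_alg m u"
  shows "vmult m v u = v"
proof
  fix c
  have unit: "\<And>a. (\<Sum>b\<in>UNIV. u b * m a b c) = kdelta a c"
    using assms unfolding assoc_unital_alg_def by blast
  have "vmult m v u c = (\<Sum>a\<in>UNIV. v a * (\<Sum>b\<in>UNIV. u b * m a b c))"
    by (simp add: vmult_def sum_distrib_left mult_ac)
  also have "\<dots> = v c" by (simp add: unit kdelta_sum_right)
  finally show "vmult m v u c = v c" .
qed

lemma vmult_fscale_right: "vmult m x (fscale c y) = fscale c (vmult m x y)"
  by (simp add: vmult_def fscale_def fun_eq_iff sum_distrib_left mult_ac)

lemma linear_vmult_left: "Vector_Spaces.linear fscale fscale (\<lambda>x. vmult m x y)"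
  by (auto simp: Vector_Spaces.linear_iff fun_space.vector_space_axioms vmult_def fscale_def
      fun_eq_iff algebra_simps sum.distrib sum_distrib_left)

lemma veps_diff: "veps e (x - y) = veps e x - veps e y"
  by (simp add: veps_def algebra_simps sum_subtractf)

lemma veps_fscale: "veps e (fscale c x) = c * veps e x"
  by (simp add: veps_def fscale_def algebra_simps sum_distrib_left)

lemma veps_vmult:
  assumes "bialg_compat m u d e"
  shows "veps e (vmult m x y) = veps e x * veps e y"
proof -
  have counit_mult: "\<And>a b. (\<Sum>c\<in>UNIV. m a b c * e c) = e a * e b"
    using assms unfolding bialg_compat_def by blast
  have "veps e (vmult m x y) = (\<Sum>a\<in>UNIV. \<Sum>b\<in>UNIV. x a * y b * (\<Sum>c\<in>UNIV. m a b c * e c))"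
    apply (simp add: veps_def vmult_def sum_distrib_left sum_distrib_right)
    apply (simp only: sum.cartesian_product UNIV_Times_UNIV)
    apply (rule sum.reindex_bij_witness[where i="\<lambda>(a,b,c). (c,a,b)" and j="\<lambda>(c,a,b). (a,b,c)"])
      apply (auto simp: mult_ac)
    done
  also have "\<dots> = veps e x * veps e y"
    by (simp only: counit_mult) (simp add: veps_def sum_product mult_ac)
  finally show ?thesis .
qed

lemma veps_unit:
  assumes "bialg_compat m u d e"
  shows "veps e u = 1"
  using assms unfolding bialg_compat_def veps_def by blast

locale local_augmented_alg =
  fixes m :: "'a::finite \<Rightarrow> 'a \<Rightarrow> 'a \<Rightarrow> 'k::field" and u :: "'a \<Rightarrow> 'k" and e :: "'a \<Rightarrow> 'k"
  assumes assoc_unital: "assoc_unital_alg m u" and local: "local_alg m u"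
    and veps_mult: "veps e (vmult m x y) = veps e x * veps e y"
    and veps_unit: "veps e u = 1"

lemma local_augmented_alg_if_hopf_algebra:
  assumes "hopf_algebra m u d e s" and "local_alg m u"
  shows "local_augmented_alg m u e"
proof -
  have "assoc_unital_alg m u" and "bialg_compat m u d e"
    using assms(1) unfolding hopf_algebra_def by simp_all
  then show ?thesis
    using assms(2) by unfold_locales (simp_all add: veps_vmult veps_unit)
qed

context local_augmented_alg
begin

lemma augmentation_kernel_not_unit:
  assumes "veps e y = 0"
  shows "\<not> is_unit_elem m u y"
proof
  assume "is_unit_elem m u y"
  then obtain z where "vmult m y z = u" unfolding is_unit_elem_def by blast
  then have "veps e y * veps e z = 1" using veps_mult veps_unit by metis
  with assms show False by simp
qed

lemma unit_minus_augmentation_kernel_invertible: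
  assumes "veps e y = 0"
  obtains w where "vmult m w (u - y) = u"
proof -
  have "is_unit_elem m u (u - y)"
  proof (rule ccontr)
    assume "\<not> is_unit_elem m u (u - y)"
    with local augmentation_kernel_not_unit[OF assms]
    have "\<not> is_unit_elem m u (\<lambda>i. (u - y) i + y i)"
      unfolding local_alg_def by blast
    moreover have "is_unit_elem m u u"
      using vmult_unit_left[OF assoc_unital] unfolding is_unit_elem_def by blast
    ultimately show False by simp
  qed
  then show ?thesis using that unfolding is_unit_elem_def by blast
qed

end

section \<open>Invariant vectors in representations of a local algebra\<close>

locale local_alg_representation = local_augmented_alg m u e
  for m :: "'a::finite \<Rightarrow> 'a \<Rightarrow> 'a \<Rightarrow> 'k::field" and u e +
  fixes op :: "('a \<Rightarrow> 'k) \<Rightarrow> ('v::finite \<Rightarrow> 'k) \<Rightarrow> ('v \<Rightarrow> 'k)"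
  assumes linear_op: "Vector_Spaces.linear fscale fscale (\<lambda>h. op h v)"
    and op_zero: "op h 0 = 0"
    and op_vmult: "op (vmult m h g) v = op h (op g v)"
    and op_unit: "op u v = v"
begin

lemma op_invariant_if_augmentation_kernel_kills:
  assumes kills: "\<And>y. veps e y = 0 \<Longrightarrow> op y v = 0"
  shows "op h v = fscale (veps e h) v"
proof -
  define c where "c = veps e h"
  have "veps e (h - fscale c u) = 0"
    by (simp add: c_def veps_diff veps_fscale veps_unit)
  then have "op (h - fscale c u) v = 0" by (rule kills)
  then show ?thesis
    by (simp add: c_def fun_pair.linear_diff[OF linear_op] fun_pair.linear_scale[OF linear_op] op_unit)
qed

lemma op_fixed_by_augmentation_kernel_eq_0:
  assumes "veps e y = 0" and "op y v = v"
  shows "v = 0"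
proof -
  obtain w where w: "vmult m w (u - y) = u"
    using unit_minus_augmentation_kernel_invertible[OF assms(1)] .
  have "op (u - y) v = 0"
    using assms(2) by (simp add: fun_pair.linear_diff[OF linear_op] op_unit)
  then have "op (vmult m w (u - y)) v = 0" by (simp add: op_vmult op_zero)
  then show ?thesis by (simp add: w op_unit)
qed

definition cyclic_submodule :: "('v \<Rightarrow> 'k) \<Rightarrow> ('v \<Rightarrow> 'k) set" where
  "cyclic_submodule v = range (\<lambda>h. op h v)"

lemma subspace_cyclic_submodule: "fun_space.subspace (cyclic_submodule v)"
  unfolding cyclic_submodule_def
  by (rule fun_pair.linear_subspace_image[OF linear_op fun_space.subspace_UNIV])

lemma cyclic_submodule_op_subset: "cyclic_submodule (op h v) \<subseteq> cyclic_submodule v"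
proof
  fix x assume "x \<in> cyclic_submodule (op h v)"
  then obtain g where "x = op g (op h v)" unfolding cyclic_submodule_def by blast
  then show "x \<in> cyclic_submodule v" unfolding cyclic_submodule_def by (metis op_vmult rangeI)
qed

text \<open>If some y in the augmentation kernel moved a vector v whose cyclic submodule has minimal
  dimension, the cyclic submodule of op y v would be that of v, so v = op (h y) v for some h,
  although u - h y is invertible.\<close>
lemma invariant_vector_exists:
  assumes V: "fun_space.subspace V" and V_stable: "\<And>h v. v \<in> V \<Longrightarrow> op h v \<in> V"
    and "v0 \<in> V" and "v0 \<noteq> 0"
  shows "\<exists>v\<in>V. v \<noteq> 0 \<and> (\<forall>h. op h v = fscale (veps e h) v)"
proof -
  have "\<exists>v. (v \<in> V \<and> v \<noteq> 0) \<and> (\<forall>w. w \<in> V \<and> w \<noteq> 0 \<longrightarrow>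
      fun_space.dim (cyclic_submodule v) \<le> fun_space.dim (cyclic_submodule w))"
    by (rule ex_has_least_nat) (use assms(3,4) in simp)
  then obtain v where v: "v \<in> V" "v \<noteq> 0"
    and v_min: "\<And>w. w \<in> V \<Longrightarrow> w \<noteq> 0 \<Longrightarrow> fun_space.dim (cyclic_submodule v) \<le> fun_space.dim (cyclic_submodule w)"
    by blast
  have "op y v = 0" if y: "veps e y = 0" for y
  proof (rule ccontr)
    assume "op y v \<noteq> 0"
    then have "fun_space.dim (cyclic_submodule v) \<le> fun_space.dim (cyclic_submodule (op y v))"
      using v_min V_stable v(1) by blast
    then have "cyclic_submodule (op y v) = cyclic_submodule v"
      using fun_space.subspace_dim_equal[OF subspace_cyclic_submodule subspace_cyclic_submodule
          cyclic_submodule_op_subset] by blast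
    moreover have "v \<in> cyclic_submodule v"
      unfolding cyclic_submodule_def using op_unit by (metis rangeI)
    ultimately obtain h where "v = op h (op y v)"
      unfolding cyclic_submodule_def by auto
    then have "op (vmult m h y) v = v" by (simp add: op_vmult)
    moreover have "veps e (vmult m h y) = 0" by (simp add: veps_mult y)
    ultimately show False using op_fixed_by_augmentation_kernel_eq_0 v(2) by blast
  qed
  then show ?thesis using v op_invariant_if_augmentation_kernel_kills by blast
qed

end

lemma (in local_augmented_alg) local_alg_representation_vmult:
  "local_alg_representation m u e (vmult m)"
proof (intro local_alg_representation.intro local_alg_representation_axioms.intro)
  show "local_augmented_alg m u e" by (rule local_augmented_alg_axioms)
  show "Vector_Spaces.linear fscale fscale (\<lambda>h. vmult m h v)" for v by (rule linear_vmult_left)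
  show "vmult m h 0 = 0" for h by (simp add: vmult_def zero_fun_def)
  show "vmult m (vmult m h g) v = vmult m h (vmult m g v)" for h g v by (rule vmult_assoc[OF assoc_unital])
  show "vmult m u v = v" for v by (rule vmult_unit_left[OF assoc_unital])
qed

lemma (in local_augmented_alg) left_integral_exists:
  obtains lam where "lam \<in> left_integrals m e" and "lam \<noteq> 0"
proof -
  interpret local_alg_representation m u e "vmult m"
    by (rule local_alg_representation_vmult)
  have "u \<noteq> 0" using local unfolding local_alg_def by (simp add: zero_fun_def)
  then obtain lam where "lam \<noteq> 0" and "\<forall>h. vmult m h lam = fscale (veps e h) lam"
    using invariant_vector_exists[OF fun_space.subspace_UNIV UNIV_I UNIV_I] by blast
  then show ?thesis
    using that by (simp add: left_integrals_def fscale_def)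
qed

section \<open>The action of H on S and Hopfological homology\<close>

lemma vact_fscale_left: "vact act (fscale c h) s = fscale c (vact act h s)"
  by (simp add: vact_def fscale_def fun_eq_iff sum_distrib_left mult_ac)

lemma vact_fscale_right: "vact act h (fscale c s) = fscale c (vact act h s)"
  by (simp add: vact_def fscale_def fun_eq_iff sum_distrib_left mult_ac)

lemma linear_vact_left: "Vector_Spaces.linear fscale fscale (\<lambda>h. vact act h s)"
  by (auto simp: Vector_Spaces.linear_iff fun_space.vector_space_axioms vact_def fscale_def
      fun_eq_iff algebra_simps sum.distrib sum_distrib_left)

lemma linear_vact_right: "Vector_Spaces.linear fscale fscale (vact act h)"
  by (auto simp: Vector_Spaces.linear_iff fun_space.vector_space_axioms vact_def fscale_def
      fun_eq_iff algebra_simps sum.distrib sum_distrib_left)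

lemma vact_vmult:
  assumes "module_algebra mH uH dH eH mS uS act"
  shows "vact act (vmult mH h g) v = vact act h (vact act g v)"
proof
  fix t
  have mult: "\<And>a b p. (\<Sum>c\<in>UNIV. mH a b c * act c p t) = (\<Sum>r\<in>UNIV. act b p r * act a r t)"
    using assms unfolding module_algebra_def by blast
  have "vact act (vmult mH h g) v t
      = (\<Sum>a\<in>UNIV. \<Sum>b\<in>UNIV. \<Sum>p\<in>UNIV. h a * g b * v p * (\<Sum>c\<in>UNIV. mH a b c * act c p t))"
    apply (simp add: vact_def vmult_def sum_distrib_left sum_distrib_right)
    apply (simp only: sum.cartesian_product UNIV_Times_UNIV)
    apply (rule sum.reindex_bij_witness[where i="\<lambda>(a,b,p,c). (c,p,a,b)" and j="\<lambda>(c,p,a,b). (a,b,p,c)"])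
      apply (auto simp: mult_ac)
    done
  also have "\<dots> = (\<Sum>a\<in>UNIV. \<Sum>b\<in>UNIV. \<Sum>p\<in>UNIV. h a * g b * v p * (\<Sum>r\<in>UNIV. act b p r * act a r t))"
    by (simp only: mult)
  also have "\<dots> = vact act h (vact act g v) t"
    apply (simp add: vact_def sum_distrib_left sum_distrib_right)
    apply (simp only: sum.cartesian_product UNIV_Times_UNIV)
    apply (rule sum.reindex_bij_witness[where j="\<lambda>(a,b,p,r). (a,r,b,p)" and i="\<lambda>(a,r,b,p). (a,b,p,r)"])
      apply (auto simp: mult_ac)
    done
  finally show "vact act (vmult mH h g) v t = vact act h (vact act g v) t" .
qed

lemma vact_unit:
  assumes "module_algebra mH uH dH eH mS uS act"
  shows "vact act uH v = v"
proof
  fix t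
  have unit: "\<And>p. (\<Sum>c\<in>UNIV. uH c * act c p t) = kdelta p t"
    using assms unfolding module_algebra_def by blast
  have "vact act uH v t = (\<Sum>p\<in>UNIV. v p * (\<Sum>c\<in>UNIV. uH c * act c p t))"
    by (simp add: vact_def sum_distrib_left) (subst sum.swap, simp add: mult_ac)
  also have "\<dots> = v t" by (simp add: unit kdelta_sum_right)
  finally show "vact act uH v t = v t" .
qed

lemma (in local_augmented_alg) local_alg_representation_vact:
  assumes "module_algebra m u d e mS uS act"
  shows "local_alg_representation m u e (vact act)"
proof (intro local_alg_representation.intro local_alg_representation_axioms.intro)
  show "local_augmented_alg m u e" by (rule local_augmented_alg_axioms)
  show "Vector_Spaces.linear fscale fscale (\<lambda>h. vact act h v)" for v by (rule linear_vact_left)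
  show "vact act h 0 = 0" for h by (simp add: vact_def zero_fun_def)
  show "vact act (vmult m h g) v = vact act h (vact act g v)" for h g v by (rule vact_vmult[OF assms])
  show "vact act u v = v" for v by (rule vact_unit[OF assms])
qed

lemma subspace_invariants: "fun_space.subspace (invariants eH act)"
  unfolding fun_space.subspace_def invariants_def
  by (simp add: fun_pair.linear_0[OF linear_vact_right] fun_pair.linear_add[OF linear_vact_right]
      fun_pair.linear_scale[OF linear_vact_right])
    (simp add: fscale_def fun_eq_iff algebra_simps)

lemma vact_left_integral_invariant:
  assumes "module_algebra mH uH dH eH mS uS act" and "lam \<in> left_integrals mH eH"
  shows "vact act lam s \<in> invariants eH act"
  unfolding invariants_def
proof (intro CollectI allI)
  fix h
  have "vact act h (vact act lam s) = vact act (vmult mH h lam) s"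
    by (simp add: vact_vmult[OF assms(1)])
  also have "\<dots> = vact act (fscale (veps eH h) lam) s"
    using assms(2) unfolding left_integrals_def fscale_def by simp
  also have "\<dots> = (\<lambda>t. veps eH h * vact act lam s t)"
    by (simp only: vact_fscale_left) (simp add: fscale_def)
  finally show "vact act h (vact act lam s) = (\<lambda>t. veps eH h * vact act lam s t)" .
qed

lemma integral_image_subset_invariants:
  assumes "module_algebra mH uH dH eH mS uS act"
  shows "integral_image mH eH act \<subseteq> invariants eH act"
proof
  fix v assume "v \<in> integral_image mH eH act"
  then obtain n lam s where lam: "\<forall>i<n. lam i \<in> left_integrals mH eH"
    and v: "v = (\<lambda>t. \<Sum>i<(n::nat). vact act (lam i) (s i) t)"
    unfolding integral_image_def by blast
  have "v = (\<Sum>i<n. vact act (lam i) (s i))"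
    by (simp add: v fun_eq_iff sum_fun_apply)
  also have "\<dots> \<in> invariants eH act"
    using lam vact_left_integral_invariant[OF assms]
    by (intro fun_space.subspace_sum[OF subspace_invariants]) simp
  finally show "v \<in> invariants eH act" .
qed

lemma hopfological_homology_zero_if_integral_acts_nontrivially:
  assumes "module_algebra mH uH dH eH mS uS act" and "invariants eH act = scalars uS"
    and lam: "lam \<in> left_integrals mH eH" and "vact act lam s0 \<noteq> 0"
  shows "hopfological_homology_zero mH eH act"
  unfolding hopfological_homology_zero_def
proof (rule subset_antisym)
  obtain c0 where c0: "vact act lam s0 = (\<lambda>t. c0 * uS t)"
    using vact_left_integral_invariant[OF assms(1) lam] assms(2) unfolding scalars_def by blast
  with assms(4) have "c0 \<noteq> 0" by (auto simp: zero_fun_def)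
  show "invariants eH act \<subseteq> integral_image mH eH act"
  proof
    fix v assume "v \<in> invariants eH act"
    then obtain c where v: "v = (\<lambda>t. c * uS t)" using assms(2) unfolding scalars_def by blast
    have "v = vact act lam (fscale (c / c0) s0)"
      using \<open>c0 \<noteq> 0\<close> by (simp only: vact_fscale_right) (simp add: v c0 fscale_def)
    then show "v \<in> integral_image mH eH act"
      unfolding integral_image_def using lam
      by (intro CollectI exI[of _ "Suc 0"] exI[of _ "\<lambda>_. lam"] exI[of _ "\<lambda>_. fscale (c / c0) s0"]) simp
  qed
qed (rule integral_image_subset_invariants[OF assms(1)])

section \<open>Endomorphism matrices\<close>

text \<open>As in galois_map, a matrix M represents the endomorphism of S sending f_q to
  \<Sum>t. M q t f_t; vectors are rows, so matmul A B represents A followed by B. In particular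
  act a and mS p are the matrices of e_a and of left multiplication by f_p.\<close>

definition matmul :: "('a \<Rightarrow> 'b::finite \<Rightarrow> 'k::field) \<Rightarrow> ('b \<Rightarrow> 'c \<Rightarrow> 'k) \<Rightarrow> ('a \<Rightarrow> 'c \<Rightarrow> 'k)" where
  "matmul A B = (\<lambda>q t. \<Sum>r\<in>UNIV. A q r * B r t)"

definition vecmat :: "('a::finite \<Rightarrow> 'k::field) \<Rightarrow> ('a \<Rightarrow> 'b \<Rightarrow> 'k) \<Rightarrow> ('b \<Rightarrow> 'k)" where
  "vecmat t M = (\<lambda>r. \<Sum>q\<in>UNIV. t q * M q r)"

definition act_mat :: "('i::finite \<Rightarrow> 'j \<Rightarrow> 'j \<Rightarrow> 'k::field) \<Rightarrow> ('i \<Rightarrow> 'k) \<Rightarrow> ('j \<Rightarrow> 'j \<Rightarrow> 'k)" where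
  "act_mat act h = (\<lambda>q t. \<Sum>a\<in>UNIV. h a * act a q t)"

definition lmult_mat :: "('j::finite \<Rightarrow> 'j \<Rightarrow> 'j \<Rightarrow> 'k::field) \<Rightarrow> ('j \<Rightarrow> 'k) \<Rightarrow> ('j \<Rightarrow> 'j \<Rightarrow> 'k)" where
  "lmult_mat mS s = (\<lambda>q t. \<Sum>p\<in>UNIV. s p * mS p q t)"

lemma matmul_assoc: "matmul (matmul A B) C = matmul A (matmul B C)"
  unfolding matmul_def fun_eq_iff
  by (simp add: sum_distrib_left sum_distrib_right) (subst sum.swap, simp add: mult_ac)

lemma matmul_sum_left: "matmul (\<lambda>q t. \<Sum>x\<in>X. F x q t) B = (\<lambda>q t. \<Sum>x\<in>X. matmul (F x) B q t)"
  unfolding matmul_def fun_eq_iff by (simp add: sum_distrib_right) (subst sum.swap, simp)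

lemma matmul_sum_right: "matmul A (\<lambda>q t. \<Sum>x\<in>X. F x q t) = (\<lambda>q t. \<Sum>x\<in>X. matmul A (F x) q t)"
  unfolding matmul_def fun_eq_iff by (simp add: sum_distrib_left) (subst sum.swap, simp)

lemma matmul_scale_left: "matmul (\<lambda>q t. c * A q t) B = (\<lambda>q t. c * matmul A B q t)"
  by (simp add: matmul_def sum_distrib_left mult_ac)

lemma matmul_scale_right: "matmul A (\<lambda>q t. c * B q t) = (\<lambda>q t. c * matmul A B q t)"
  by (simp add: matmul_def sum_distrib_left mult_ac)

lemma matmul_kdelta_left: "matmul kdelta M = M"
  by (simp add: matmul_def fun_eq_iff kdelta_sum_left)

lemma matmul_kdelta_right: "matmul M kdelta = M"
  by (simp add: matmul_def fun_eq_iff kdelta_sum_right)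

lemma matmul_row: "matmul A B q = vecmat (A q) B"
  by (simp add: matmul_def vecmat_def)

lemma vecmat_matmul: "vecmat (vecmat t A) B = vecmat t (matmul A B)"
  unfolding vecmat_def matmul_def fun_eq_iff
  by (simp add: sum_distrib_left sum_distrib_right) (subst sum.swap, simp add: mult_ac)

lemma vecmat_kdelta: "vecmat (kdelta q) M = M q"
  by (simp add: vecmat_def fun_eq_iff kdelta_sum_left)

lemma vecmat_add: "vecmat (t + t') M = vecmat t M + vecmat t' M"
  by (simp add: vecmat_def fun_eq_iff algebra_simps sum.distrib)

lemma vecmat_fscale: "vecmat (fscale c t) M = fscale c (vecmat t M)"
  by (simp add: vecmat_def fscale_def fun_eq_iff algebra_simps sum_distrib_left)

lemma vecmat_lmult_mat: "vecmat t (lmult_mat mS s) = vmult mS s t"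
  unfolding vecmat_def lmult_mat_def vmult_def fun_eq_iff
  by (simp add: sum_distrib_left) (subst sum.swap, simp add: mult_ac)

lemma vact_eq_vecmat_act_mat: "vact act h s = vecmat s (act_mat act h)"
  unfolding vact_def vecmat_def act_mat_def fun_eq_iff
  by (simp add: sum_distrib_left) (subst sum.swap, simp add: mult_ac)

lemma pairing_vecmat: "pairing t (\<lambda>q. pairing (M q) \<beta>) = pairing (vecmat t M) \<beta>"
  unfolding pairing_def vecmat_def
  by (simp add: sum_distrib_left sum_distrib_right) (subst sum.swap, simp add: mult_ac)

lemma act_mat_unit:
  assumes "module_algebra mH uH dH eH mS uS act"
  shows "act_mat act uH = kdelta"
  using assms unfolding module_algebra_def act_mat_def by (simp add: fun_eq_iff)

lemma lmult_mat_unit: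
  assumes "assoc_unital_alg mS uS"
  shows "lmult_mat mS uS = kdelta"
  using assms unfolding assoc_unital_alg_def lmult_mat_def by (simp add: fun_eq_iff)

lemma matmul_act_act:
  assumes "module_algebra mH uH dH eH mS uS act"
  shows "matmul (act b) (act a) = (\<lambda>q t. \<Sum>c\<in>UNIV. mH a b c * act c q t)"
proof (intro ext)
  fix q t
  have "(\<Sum>c\<in>UNIV. mH a b c * act c q t) = (\<Sum>r\<in>UNIV. act b q r * act a r t)"
    using assms unfolding module_algebra_def by blast
  then show "matmul (act b) (act a) q t = (\<Sum>c\<in>UNIV. mH a b c * act c q t)"
    by (simp add: matmul_def)
qed

lemma matmul_mult_act:
  assumes "module_algebra mH uH dH eH mS uS act"
  shows "matmul (mS p) (act a) =
    (\<lambda>q t. \<Sum>b\<in>UNIV. \<Sum>c\<in>UNIV. \<Sum>x\<in>UNIV. dH a b c * act b p x * matmul (act c) (mS x) q t)"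
proof (intro ext)
  fix q t
  have compat: "(\<Sum>r\<in>UNIV. mS p q r * act a r t) =
      (\<Sum>b\<in>UNIV. \<Sum>c\<in>UNIV. \<Sum>x\<in>UNIV. \<Sum>y\<in>UNIV. dH a b c * act b p x * act c q y * mS x y t)"
    using assms unfolding module_algebra_def by blast
  show "matmul (mS p) (act a) q t =
      (\<Sum>b\<in>UNIV. \<Sum>c\<in>UNIV. \<Sum>x\<in>UNIV. dH a b c * act b p x * matmul (act c) (mS x) q t)"
    unfolding matmul_def compat by (simp add: sum_distrib_left mult_ac)
qed

lemma matmul_mult_mult:
  assumes "assoc_unital_alg mS uS"
  shows "matmul (mS p') (mS p) = (\<lambda>r t. \<Sum>e\<in>UNIV. mS p p' e * mS e r t)"
proof (intro ext)
  fix r t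
  have "(\<Sum>e\<in>UNIV. mS p p' e * mS e r t) = (\<Sum>e\<in>UNIV. mS p' r e * mS p e t)"
    using assms unfolding assoc_unital_alg_def by blast
  then show "matmul (mS p') (mS p) r t = (\<Sum>e\<in>UNIV. mS p p' e * mS e r t)"
    by (simp add: matmul_def)
qed

section \<open>The image of the Galois map is a subalgebra\<close>

lemma galois_map_eq_sum:
  "galois_map mS act z = (\<lambda>q t. \<Sum>p\<in>UNIV. \<Sum>a\<in>UNIV. z (p, a) * matmul (act a) (mS p) q t)"
  by (simp add: galois_map_def matmul_def)

lemma galois_map_add: "galois_map mS act (z + z') q = galois_map mS act z q + galois_map mS act z' q"
  by (simp add: galois_map_def fun_eq_iff algebra_simps sum.distrib)

lemma galois_map_fscale: "galois_map mS act (fscale c z) q = fscale c (galois_map mS act z q)"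
  by (simp add: galois_map_def fscale_def fun_eq_iff algebra_simps sum_distrib_left)

lemma galois_map_range_sum:
  assumes "finite X" and "\<And>x. x \<in> X \<Longrightarrow> F x \<in> range (galois_map mS act)"
  shows "(\<lambda>q t. \<Sum>x\<in>X. F x q t) \<in> range (galois_map mS act)"
proof -
  have "\<forall>x\<in>X. \<exists>z. F x = galois_map mS act z" using assms(2) by blast
  then obtain z where z: "\<And>x. x \<in> X \<Longrightarrow> F x = galois_map mS act (z x)"
    by (auto dest: bchoice)
  have "(\<lambda>q t. \<Sum>x\<in>X. F x q t) = galois_map mS act (\<lambda>pa. \<Sum>x\<in>X. z x pa)"
  proof (intro ext)
    fix q t
    have "(\<Sum>x\<in>X. F x q t) = (\<Sum>x\<in>X. \<Sum>p\<in>UNIV. \<Sum>a\<in>UNIV. z x (p, a) * matmul (act a) (mS p) q t)"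
      using z by (intro sum.cong refl) (simp add: galois_map_eq_sum)
    also have "\<dots> = (\<Sum>p\<in>UNIV. \<Sum>x\<in>X. \<Sum>a\<in>UNIV. z x (p, a) * matmul (act a) (mS p) q t)"
      by (rule sum.swap)
    also have "\<dots> = (\<Sum>p\<in>UNIV. \<Sum>a\<in>UNIV. \<Sum>x\<in>X. z x (p, a) * matmul (act a) (mS p) q t)"
      by (rule sum.cong[OF refl], rule sum.swap)
    also have "\<dots> = galois_map mS act (\<lambda>pa. \<Sum>x\<in>X. z x pa) q t"
      by (simp add: galois_map_eq_sum sum_distrib_right)
    finally show "(\<Sum>x\<in>X. F x q t) = galois_map mS act (\<lambda>pa. \<Sum>x\<in>X. z x pa) q t" .
  qed
  then show ?thesis by (metis rangeI)
qed

lemma galois_map_range_scale: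
  assumes "F \<in> range (galois_map mS act)"
  shows "(\<lambda>q t. c * F q t) \<in> range (galois_map mS act)"
proof -
  obtain z where "F = galois_map mS act z" using assms by blast
  then have "(\<lambda>q t. c * F q t) = galois_map mS act (\<lambda>pa. c * z pa)"
    by (simp add: galois_map_def sum_distrib_left mult_ac)
  then show ?thesis by simp
qed

lemma galois_map_range_basis:
  fixes mS :: "'j::finite \<Rightarrow> 'j \<Rightarrow> 'j \<Rightarrow> 'k::field" and act :: "'i::finite \<Rightarrow> 'j \<Rightarrow> 'j \<Rightarrow> 'k"
  shows "matmul (act a) (mS p) \<in> range (galois_map mS act)"
proof -
  have "kdelta (p, a) (p', a') = kdelta p p' * (kdelta a a' :: 'k)" for p' a'
    by (simp add: kdelta_def)
  then have "galois_map mS act (kdelta (p, a)) = matmul (act a) (mS p)"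
    by (simp add: galois_map_eq_sum mult.assoc sum_distrib_left[symmetric] kdelta_sum_left)
  then show ?thesis by (metis rangeI)
qed

lemma galois_map_pure_tensor:
  "galois_map mS act (\<lambda>(p, a). s p * h a) = matmul (act_mat act h) (lmult_mat mS s)"
  unfolding galois_map_eq_sum act_mat_def lmult_mat_def
  by (simp add: matmul_sum_left matmul_sum_right matmul_scale_left matmul_scale_right sum_distrib_left
      fun_eq_iff) (subst sum.swap, simp add: mult_ac)

lemma act_mat_in_range_galois_map:
  assumes "assoc_unital_alg mS uS"
  shows "act_mat act h \<in> range (galois_map mS act)"
proof -
  have "galois_map mS act (\<lambda>(p, a). uS p * h a) = act_mat act h"
    by (simp add: galois_map_pure_tensor lmult_mat_unit[OF assms] matmul_kdelta_right)
  then show ?thesis by (metis rangeI)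
qed

lemma lmult_mat_in_range_galois_map:
  assumes "module_algebra mH uH dH eH mS uS act"
  shows "lmult_mat mS s \<in> range (galois_map mS act)"
proof -
  have "galois_map mS act (\<lambda>(p, a). s p * uH a) = lmult_mat mS s"
    by (simp add: galois_map_pure_tensor act_mat_unit[OF assms] matmul_kdelta_left)
  then show ?thesis by (metis rangeI)
qed

lemma galois_map_range_matmul_right:
  assumes "\<And>p a. matmul (matmul (act a) (mS p)) X \<in> range (galois_map mS act)"
    and "M \<in> range (galois_map mS act)"
  shows "matmul M X \<in> range (galois_map mS act)"
proof -
  obtain z where "M = galois_map mS act z" using assms(2) by blast
  then have "matmul M X = (\<lambda>q t. \<Sum>p\<in>UNIV. \<Sum>a\<in>UNIV. z (p, a) * matmul (matmul (act a) (mS p)) X q t)"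
    by (simp add: galois_map_eq_sum matmul_sum_left matmul_scale_left)
  also have "\<dots> \<in> range (galois_map mS act)"
    by (intro galois_map_range_sum galois_map_range_scale assms(1)) simp_all
  finally show ?thesis .
qed

context
  fixes mH :: "'i::finite \<Rightarrow> 'i \<Rightarrow> 'i \<Rightarrow> 'k::field" and uH dH eH
    and mS :: "'j::finite \<Rightarrow> 'j \<Rightarrow> 'j \<Rightarrow> 'k" and uS act
  assumes module_alg: "module_algebra mH uH dH eH mS uS act" and alg_S: "assoc_unital_alg mS uS"
begin

lemma galois_map_range_matmul_mult:
  assumes "M \<in> range (galois_map mS act)"
  shows "matmul M (mS p') \<in> range (galois_map mS act)"
proof (rule galois_map_range_matmul_right[OF _ assms])
  fix p a
  have "matmul (matmul (act a) (mS p)) (mS p') = (\<lambda>q t. \<Sum>e\<in>UNIV. mS p' p e * matmul (act a) (mS e) q t)"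
    unfolding matmul_assoc matmul_mult_mult[OF alg_S] by (simp add: matmul_sum_right matmul_scale_right)
  also have "\<dots> \<in> range (galois_map mS act)"
    by (intro galois_map_range_sum galois_map_range_scale galois_map_range_basis) simp_all
  finally show "matmul (matmul (act a) (mS p)) (mS p') \<in> range (galois_map mS act)" .
qed

lemma galois_map_range_matmul_act:
  assumes "M \<in> range (galois_map mS act)"
  shows "matmul M (act b) \<in> range (galois_map mS act)"
proof (rule galois_map_range_matmul_right[OF _ assms])
  fix p a
  have inner: "matmul (act a) (matmul (act c) (mS x)) \<in> range (galois_map mS act)" for c x
  proof -
    have "matmul (act a) (matmul (act c) (mS x)) = (\<lambda>q t. \<Sum>d\<in>UNIV. mH c a d * matmul (act d) (mS x) q t)"
      unfolding matmul_assoc[symmetric] matmul_act_act[OF module_alg] by (simp add: matmul_sum_left matmul_scale_left)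
    also have "\<dots> \<in> range (galois_map mS act)"
      by (intro galois_map_range_sum galois_map_range_scale galois_map_range_basis) simp_all
    finally show ?thesis .
  qed
  have "matmul (matmul (act a) (mS p)) (act b) = (\<lambda>q t. \<Sum>b1\<in>UNIV. \<Sum>b2\<in>UNIV. \<Sum>x\<in>UNIV.
      dH b b1 b2 * act b1 p x * matmul (act a) (matmul (act b2) (mS x)) q t)"
    unfolding matmul_assoc matmul_mult_act[OF module_alg] by (simp add: matmul_sum_right matmul_scale_right)
  also have "\<dots> \<in> range (galois_map mS act)"
    by (intro galois_map_range_sum galois_map_range_scale inner) simp_all
  finally show "matmul (matmul (act a) (mS p)) (act b) \<in> range (galois_map mS act)" .
qed

lemma galois_map_range_matmul:
  assumes "M \<in> range (galois_map mS act)" and "N \<in> range (galois_map mS act)"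
  shows "matmul M N \<in> range (galois_map mS act)"
proof -
  obtain z where "N = galois_map mS act z" using assms(2) by blast
  then have "matmul M N =
      (\<lambda>q t. \<Sum>p\<in>UNIV. \<Sum>a\<in>UNIV. z (p, a) * matmul (matmul M (act a)) (mS p) q t)"
    by (simp add: galois_map_eq_sum matmul_sum_right matmul_scale_right matmul_assoc)
  also have "\<dots> \<in> range (galois_map mS act)"
    by (intro galois_map_range_sum galois_map_range_scale galois_map_range_matmul_mult
        galois_map_range_matmul_act assms(1)) simp_all
  finally show ?thesis .
qed

end

section \<open>Bijectivity of the Galois map\<close>

lemma integral_acts_through_functional:
  assumes "module_algebra mH uH dH eH mS uS act" and "invariants eH act = scalars uS"
    and "lam \<in> left_integrals mH eH"
  obtains \<beta> where "\<And>s. vact act lam s = (\<lambda>t. pairing s \<beta> * uS t)"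
proof -
  have "\<forall>q. \<exists>c. vact act lam (kdelta q) = (\<lambda>t. c * uS t)"
    using vact_left_integral_invariant[OF assms(1,3)] assms(2) unfolding scalars_def by blast
  then obtain \<beta> where \<beta>: "\<And>q. vact act lam (kdelta q) = (\<lambda>t. \<beta> q * uS t)"
    by metis
  have "vact act lam s = (\<lambda>t. pairing s \<beta> * uS t)" for s
  proof -
    have "vact act lam s = vecmat s (\<lambda>q. vact act lam (kdelta q))"
      by (simp add: vact_eq_vecmat_act_mat vecmat_kdelta)
    then show ?thesis
      by (simp add: \<beta> vecmat_def pairing_def sum_distrib_right fun_eq_iff mult.assoc)
  qed
  then show ?thesis by (rule that)
qed

context
  fixes mH :: "'i::finite \<Rightarrow> 'i \<Rightarrow> 'i \<Rightarrow> 'k::field" and uH dH eH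
    and mS :: "'j::finite \<Rightarrow> 'j \<Rightarrow> 'j \<Rightarrow> 'k" and uS act lam and \<beta> :: "'j \<Rightarrow> 'k"
  assumes local_H: "local_augmented_alg mH uH eH"
    and module_alg: "module_algebra mH uH dH eH mS uS act" and alg_S: "assoc_unital_alg mS uS"
    and invariants_eq: "invariants eH act = scalars uS"
    and lam_action: "\<And>s. vact act lam s = (\<lambda>t. pairing s \<beta> * uS t)"
    and \<beta>_nonzero: "\<beta> \<noteq> 0"
begin

lemma galois_map_range_annihilator_vact_closed:
  assumes "\<forall>M\<in>range (galois_map mS act). pairing (vecmat u M) \<beta> = 0"
  shows "\<forall>M\<in>range (galois_map mS act). pairing (vecmat (vact act h u) M) \<beta> = 0"
proof
  fix M assume "M \<in> range (galois_map mS act)"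
  then have "matmul (act_mat act h) M \<in> range (galois_map mS act)"
    by (rule galois_map_range_matmul[OF module_alg alg_S act_mat_in_range_galois_map[OF alg_S]])
  then have "pairing (vecmat u (matmul (act_mat act h) M)) \<beta> = 0"
    using assms by blast
  then show "pairing (vecmat (vact act h u) M) \<beta> = 0"
    by (simp add: vact_eq_vecmat_act_mat vecmat_matmul)
qed

lemma galois_map_range_annihilator_scalar_eq_0:
  assumes "\<forall>M\<in>range (galois_map mS act). pairing (vecmat (\<lambda>t. c * uS t) M) \<beta> = 0"
  shows "c = 0"
proof -
  have "c * pairing s \<beta> = 0" for s
  proof -
    have "vecmat (\<lambda>t. c * uS t) (lmult_mat mS s) = vmult mS s (fscale c uS)"
      by (simp add: vecmat_lmult_mat fscale_def)
    also have "\<dots> = fscale c s"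
      by (simp add: vmult_fscale_right vmult_unit_right[OF alg_S])
    finally have "vecmat (\<lambda>t. c * uS t) (lmult_mat mS s) = fscale c s" .
    moreover have "pairing (vecmat (\<lambda>t. c * uS t) (lmult_mat mS s)) \<beta> = 0"
      using assms lmult_mat_in_range_galois_map[OF module_alg] by blast
    ultimately show ?thesis by (simp add: pairing_fscale_left)
  qed
  show "c = 0"
  proof (rule ccontr)
    assume "c \<noteq> 0"
    with \<open>\<And>s. c * pairing s \<beta> = 0\<close> have "pairing s \<beta> = 0" for s by simp
    then have "\<beta> = 0" by (rule eq_0_if_pairing_eq_0)
    with \<beta>_nonzero show False ..
  qed
qed

lemma galois_map_range_annihilator_trivial:
  assumes "\<forall>M\<in>range (galois_map mS act). pairing (vecmat t M) \<beta> = 0"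
  shows "t = 0"
proof (rule ccontr)
  define U where "U = {t. \<forall>M\<in>range (galois_map mS act). pairing (vecmat t M) \<beta> = 0}"
  have "fun_space.subspace U"
    unfolding U_def fun_space.subspace_def
    by (simp add: vecmat_add vecmat_fscale pairing_add_left pairing_fscale_left)
      (simp add: vecmat_def pairing_def)
  moreover have "vact act h u \<in> U" if "u \<in> U" for h u
    using that unfolding U_def mem_Collect_eq by (rule galois_map_range_annihilator_vact_closed)
  moreover assume "t \<noteq> 0"
  moreover have "t \<in> U" using assms by (simp add: U_def)
  ultimately obtain v where "v \<in> U" "v \<noteq> 0" "\<forall>h. vact act h v = fscale (veps eH h) v"
    using local_alg_representation.invariant_vector_exists[OF
        local_augmented_alg.local_alg_representation_vact[OF local_H module_alg]]
    by blast
  moreover from this(3) have "v \<in> scalars uS"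
    by (simp add: invariants_eq[symmetric] invariants_def fscale_def)
  ultimately obtain c where c: "(\<lambda>t. c * uS t) \<in> U" and "(\<lambda>t. c * uS t) \<noteq> 0"
    unfolding scalars_def by blast
  moreover from c have "c = 0"
    unfolding U_def by (intro galois_map_range_annihilator_scalar_eq_0) simp
  ultimately show False by (simp add: zero_fun_def)
qed

lemma galois_functionals_eq_UNIV:
  "(\<lambda>z q. pairing (galois_map mS act z q) \<beta>) ` UNIV = UNIV"
proof (rule subspace_eq_UNIV_if_annihilator_trivial)
  have "Vector_Spaces.linear fscale fscale (\<lambda>z q. pairing (galois_map mS act z q) \<beta>)"
    by (simp add: Vector_Spaces.linear_iff fun_space.vector_space_axioms galois_map_add galois_map_fscale
        pairing_add_left pairing_fscale_left) (simp add: fscale_def plus_fun_def)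
  then show "fun_space.subspace ((\<lambda>z q. pairing (galois_map mS act z q) \<beta>) ` UNIV)"
    by (rule fun_pair.linear_subspace_image[OF _ fun_space.subspace_UNIV])
next
  fix t assume "\<forall>w\<in>(\<lambda>z q. pairing (galois_map mS act z q) \<beta>) ` UNIV. pairing t w = 0"
  then show "t = 0"
    by (intro galois_map_range_annihilator_trivial) (simp add: pairing_vecmat)
qed

lemma rank_one_in_range_galois_map:
  assumes "M \<in> range (galois_map mS act)"
  shows "(\<lambda>q t. pairing (M q) \<beta> * a t) \<in> range (galois_map mS act)"
proof -
  have "matmul (matmul M (act_mat act lam)) (lmult_mat mS a) = (\<lambda>q t. pairing (M q) \<beta> * a t)"
  proof (intro ext)
    fix q t
    have "vecmat (M q) (act_mat act lam) = fscale (pairing (M q) \<beta>) uS"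
      by (simp add: vact_eq_vecmat_act_mat[symmetric] lam_action fscale_def)
    then show "matmul (matmul M (act_mat act lam)) (lmult_mat mS a) q t = pairing (M q) \<beta> * a t"
      by (simp add: matmul_row vecmat_lmult_mat vmult_fscale_right vmult_unit_right[OF alg_S])
        (simp add: fscale_def)
  qed
  moreover have "matmul (matmul M (act_mat act lam)) (lmult_mat mS a) \<in> range (galois_map mS act)"
    by (intro galois_map_range_matmul[OF module_alg alg_S] assms act_mat_in_range_galois_map[OF alg_S]
        lmult_mat_in_range_galois_map[OF module_alg])
  ultimately show ?thesis by simp
qed

lemma surj_galois_map: "surj (galois_map mS act)"
proof -
  have "N \<in> range (galois_map mS act)" for N
  proof -
    have "(\<lambda>q t. kdelta q p * N p t) \<in> range (galois_map mS act)" for p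
    proof -
      have "(\<lambda>q. kdelta q p) \<in> (\<lambda>z q. pairing (galois_map mS act z q) \<beta>) ` UNIV"
        by (simp only: galois_functionals_eq_UNIV UNIV_I)
      then obtain z where "(\<lambda>q. kdelta q p) = (\<lambda>q. pairing (galois_map mS act z q) \<beta>)"
        by blast
      then show ?thesis
        using rank_one_in_range_galois_map[OF rangeI, of z "N p"] by (simp add: fun_eq_iff)
    qed
    then have "(\<lambda>q t. \<Sum>p\<in>UNIV. kdelta q p * N p t) \<in> range (galois_map mS act)"
      by (intro galois_map_range_sum) simp_all
    then show ?thesis by (simp add: kdelta_sum_left)
  qed
  then show ?thesis by blast
qed

end

lemma bij_galois_map_if_surj:
  fixes mS :: "'j::finite \<Rightarrow> 'j \<Rightarrow> 'j \<Rightarrow> 'k::field" and act :: "'i::finite \<Rightarrow> 'j \<Rightarrow> 'j \<Rightarrow> 'k"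
  assumes surj: "surj (galois_map mS act)" and card: "card (UNIV :: 'i set) = card (UNIV :: 'j set)"
  shows "bij (galois_map mS act)"
proof -
  define g where "g z = case_prod (galois_map mS act z)" for z
  have "g (z + z') = g z + g z'" for z z'
    by (simp add: g_def galois_map_add fun_eq_iff case_prod_unfold)
  moreover have "g (fscale c z) = fscale c (g z)" for c z
    by (simp add: g_def galois_map_fscale fun_eq_iff case_prod_unfold) (simp add: fscale_def)
  ultimately have "Vector_Spaces.linear fscale fscale g"
    by (simp add: Vector_Spaces.linear_iff fun_space.vector_space_axioms)
  moreover have "surj g"
  proof (rule surjI)
    show "g (inv (galois_map mS act) (curry f)) = f" for f
      by (simp add: g_def surj_f_inv_f[OF surj])
  qed
  moreover have "card (UNIV :: ('j \<times> 'i) set) = card (UNIV :: ('j \<times> 'j) set)"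
    using card card_cartesian_product[of "UNIV :: 'j set" "UNIV :: 'i set"]
      card_cartesian_product[of "UNIV :: 'j set" "UNIV :: 'j set"] by simp
  ultimately have "inj g" by (rule linear_surj_imp_inj_fun_space)
  then have "inj (galois_map mS act)"
    by (auto simp: g_def inj_def fun_eq_iff)
  with surj show ?thesis by (simp add: bij_def)
qed

theorem mainTheorem3:
  fixes mH :: "'i::finite \<Rightarrow> 'i \<Rightarrow> 'i \<Rightarrow> 'k::field"
    and uH :: "'i \<Rightarrow> 'k" and dH :: "'i \<Rightarrow> 'i \<Rightarrow> 'i \<Rightarrow> 'k" and eH :: "'i \<Rightarrow> 'k"
    and sH :: "'i \<Rightarrow> 'i \<Rightarrow> 'k"
    and mS :: "'j::finite \<Rightarrow> 'j \<Rightarrow> 'j \<Rightarrow> 'k" and uS :: "'j \<Rightarrow> 'k"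
    and act :: "'i \<Rightarrow> 'j \<Rightarrow> 'j \<Rightarrow> 'k"
  assumes "hopf_algebra mH uH dH eH sH"
    and "local_alg mH uH"
    and "cocommutative dH"
    and "H_extension mH uH dH eH mS uS act"
    and "faithful_action act"
    and "card (UNIV :: 'i set) = card (UNIV :: 'j set)"
  shows "hopf_galois mS act \<longleftrightarrow> hopfological_homology_zero mH eH act"
proof -
  have local_H: "local_augmented_alg mH uH eH"
    using assms(1,2) by (rule local_augmented_alg_if_hopf_algebra)
  have alg_S: "assoc_unital_alg mS uS" and module_alg: "module_algebra mH uH dH eH mS uS act"
    and invariants_eq: "invariants eH act = scalars uS"
    using assms(4) unfolding H_extension_def by simp_all
  obtain lam where lam: "lam \<in> left_integrals mH eH" "lam \<noteq> 0"
    using local_augmented_alg.left_integral_exists[OF local_H] by blast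
  obtain \<beta> where \<beta>: "\<And>s. vact act lam s = (\<lambda>t. pairing s \<beta> * uS t)"
    using integral_acts_through_functional[OF module_alg invariants_eq lam(1)] by blast
  obtain s0 where s0: "vact act lam s0 \<noteq> 0"
    using assms(5) lam(2) unfolding faithful_action_def zero_fun_def by blast
  then have "\<beta> \<noteq> 0" by (auto simp: \<beta> pairing_def zero_fun_def)
  have "surj (galois_map mS act)"
    by (rule surj_galois_map[OF local_H module_alg alg_S invariants_eq \<beta> \<open>\<beta> \<noteq> 0\<close>])
  then have "hopf_galois mS act"
    unfolding hopf_galois_def using assms(6) by (rule bij_galois_map_if_surj)
  moreover have "hopfological_homology_zero mH eH act"
    by (rule hopfological_homology_zero_if_integral_acts_nontrivially[OF module_alg invariants_eq lam(1) s0])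
  ultimately show ?thesis by blast
qed

end
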